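(* There exists an instance of the brand-effects model in which the total expected welfare of the greedy allocation is strictly smaller than the total expected welfare (evaluated in the brand-effects model) of the allocation selected by the standard model without brand effects, i.e., the allocation that places ads in positions $1,\dots,s$ in decreasing order of their eCPM bids $b_i q_i$.
   Context: Brand-effects model: there are $s$ positions and a set of advertisers, each either a brand advertiser or a non-brand advertiser; advertiser $i$ has quality score $q_i \ge 0$ and bid $b_i \ge 0$, and its eCPM bid is $b_i q_i$. Each position $k$ has two quality scores $\beta_k$ and $\eta_k$, both non-increasing in $k$, normalized so $\beta_1=\eta_1=1$. A brand (resp. non-brand) advertiser with quality $q$ shown in position $k$ is clicked with probability $\beta_k q$ (resp. $\eta_k q$). An allocation places distinct advertisers in the positions; its total expected welfare is $\sum_j b_{(j)} p_{(j)}$, where $b_{(j)}$ and $p_{(j)}$ are the bid and click probability of the ad in position $j$. The normalized eCPM of advertiser $i$ for position $k$ is $\beta_k b_i q_i$ for a brand advertiser and $\eta_k b_i q_i$ for a non-brand advertiser. The greedy allocation is defined by, for $k=1,\dots,s$ in order, placing in position $k$ the not-yet-placed ad with the highest normalized eCPM for position $k$. *)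

theory Defs
  imports Main "HOL.Real"
begin

text \<open>Advertisers are indexed by 0..<n; positions by 1..s.
  brand i: advertiser i is a brand advertiser; q i: quality; b i: bid;
  beta k, eta k: position quality scores.\<close>

definition valid_instance ::
  "nat \<Rightarrow> nat \<Rightarrow> (nat \<Rightarrow> bool) \<Rightarrow> (nat \<Rightarrow> real) \<Rightarrow> (nat \<Rightarrow> real)
   \<Rightarrow> (nat \<Rightarrow> real) \<Rightarrow> (nat \<Rightarrow> real) \<Rightarrow> bool" where
  "valid_instance s n brand q b beta eta \<longleftrightarrow>
     1 \<le> s \<and> s \<le> n \<and>
     (\<forall>i<n. 0 \<le> q i \<and> 0 \<le> b i) \<and>
     beta 1 = 1 \<and> eta 1 = 1 \<and>
     (\<forall>k\<in>{1..s}. 0 \<le> beta k \<and> 0 \<le> eta k) \<and>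
     (\<forall>k\<in>{1..s}. \<forall>l\<in>{1..s}. k \<le> l \<longrightarrow> beta l \<le> beta k \<and> eta l \<le> eta k)"

definition is_allocation :: "nat \<Rightarrow> nat \<Rightarrow> (nat \<Rightarrow> nat) \<Rightarrow> bool" where
  "is_allocation s n a \<longleftrightarrow> inj_on a {1..s} \<and> a ` {1..s} \<subseteq> {..<n}"

definition click_prob ::
  "(nat \<Rightarrow> bool) \<Rightarrow> (nat \<Rightarrow> real) \<Rightarrow> (nat \<Rightarrow> real) \<Rightarrow> (nat \<Rightarrow> real)
   \<Rightarrow> nat \<Rightarrow> nat \<Rightarrow> real" where
  "click_prob brand q beta eta i k = (if brand i then beta k else eta k) * q i"

definition welfare ::
  "nat \<Rightarrow> (nat \<Rightarrow> bool) \<Rightarrow> (nat \<Rightarrow> real) \<Rightarrow> (nat \<Rightarrow> real) \<Rightarrow> (nat \<Rightarrow> real)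
   \<Rightarrow> (nat \<Rightarrow> real) \<Rightarrow> (nat \<Rightarrow> nat) \<Rightarrow> real" where
  "welfare s brand q b beta eta a = (\<Sum>k=1..s. b (a k) * click_prob brand q beta eta (a k) k)"

definition norm_ecpm ::
  "(nat \<Rightarrow> bool) \<Rightarrow> (nat \<Rightarrow> real) \<Rightarrow> (nat \<Rightarrow> real) \<Rightarrow> (nat \<Rightarrow> real)
   \<Rightarrow> (nat \<Rightarrow> real) \<Rightarrow> nat \<Rightarrow> nat \<Rightarrow> real" where
  "norm_ecpm brand q b beta eta i k = (if brand i then beta k else eta k) * b i * q i"

definition is_greedy ::
  "nat \<Rightarrow> nat \<Rightarrow> (nat \<Rightarrow> bool) \<Rightarrow> (nat \<Rightarrow> real) \<Rightarrow> (nat \<Rightarrow> real) \<Rightarrow> (nat \<Rightarrow> real)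
   \<Rightarrow> (nat \<Rightarrow> real) \<Rightarrow> (nat \<Rightarrow> nat) \<Rightarrow> bool" where
  "is_greedy s n brand q b beta eta a \<longleftrightarrow> is_allocation s n a \<and>
     (\<forall>k\<in>{1..s}. \<forall>i<n. i \<notin> a ` {1..<k} \<longrightarrow>
        norm_ecpm brand q b beta eta i k \<le> norm_ecpm brand q b beta eta (a k) k)"

definition is_standard ::
  "nat \<Rightarrow> nat \<Rightarrow> (nat \<Rightarrow> real) \<Rightarrow> (nat \<Rightarrow> real) \<Rightarrow> (nat \<Rightarrow> nat) \<Rightarrow> bool" where
  "is_standard s n q b a \<longleftrightarrow> is_allocation s n a \<and>
     (\<forall>k\<in>{1..s}. \<forall>i<n. i \<notin> a ` {1..<k} \<longrightarrow> b i * q i \<le> b (a k) * q (a k))"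

end

theory Submission
  imports Defs
begin

text \<open>Take unit qualities, two brand ads bidding 10 and 9, a non-brand ad bidding 8,
  brand position scores \<open>\<beta> = (1, 4/5, 0)\<close> and non-brand scores \<open>\<eta> = (1, 1, 1)\<close>.
  Greedy fills slot 2 with the non-brand ad (8 > 9 \<cdot> 4/5) and so pushes the second
  brand ad into slot 3, where brand ads are never clicked: welfare 10 + 8 + 0 = 18.
  The eCPM order keeps the brand ads in slots 1, 2: welfare 10 + 36/5 + 8 = 126/5.\<close>

definition ranks_by :: "nat \<Rightarrow> nat \<Rightarrow> (nat \<Rightarrow> nat \<Rightarrow> real) \<Rightarrow> (nat \<Rightarrow> nat) \<Rightarrow> bool" where
  "ranks_by s n score a \<longleftrightarrow> is_allocation s n a \<and>
     (\<forall>k\<in>{1..s}. \<forall>i<n. i \<notin> a ` {1..<k} \<longrightarrow> score i k \<le> score (a k) k)"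

lemma is_greedy_iff_ranks_by:
  "is_greedy s n brand q b beta eta a \<longleftrightarrow> ranks_by s n (norm_ecpm brand q b beta eta) a"
  by (simp add: is_greedy_def ranks_by_def)

lemma is_standard_iff_ranks_by:
  "is_standard s n q b a \<longleftrightarrow> ranks_by s n (\<lambda>i k. b i * q i) a"
  by (simp add: is_standard_def ranks_by_def)

lemma ranks_by_unique_max:
  assumes rank: "ranks_by s n score a" and k: "k \<in> {1..s}"
    and i: "i < n" "i \<notin> a ` {1..<k}"
    and strict: "\<And>j. j < n \<Longrightarrow> j \<noteq> i \<Longrightarrow> j \<notin> a ` {1..<k} \<Longrightarrow> score j k < score i k"
  shows "a k = i"
proof (rule ccontr)
  assume ne: "a k \<noteq> i"
  have inj: "inj_on a {1..s}" and range: "a ` {1..s} \<subseteq> {..<n}"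
    using rank unfolding ranks_by_def is_allocation_def by blast+
  have "a k < n"
    using range k by blast
  moreover have "a k \<notin> a ` {1..<k}"
  proof
    assume "a k \<in> a ` {1..<k}"
    then obtain m where "m \<in> {1..<k}" "a k = a m" by blast
    moreover have "{1..<k} \<subseteq> {1..s}" using k by auto
    ultimately show False
      using inj_onD[OF inj] k by fastforce
  qed
  ultimately have "score (a k) k < score i k"
    using strict ne by blast
  moreover have "score i k \<le> score (a k) k"
    using rank k i unfolding ranks_by_def by blast
  ultimately show False by simp
qed

lemma three_positions: "{1..3::nat} = {1, 2, 3}"
  by auto

lemma earlier_positions: "{1..<1::nat} = {}" "{1..<2::nat} = {1}" "{1..<3::nat} = {1, 2}"
  by auto

lemma all_below_three: "(\<forall>i<3. P i) \<longleftrightarrow> P (0::nat) \<and> P 1 \<and> P 2"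
  by (auto simp: less_Suc_eq numeral_3_eq_3 numeral_2_eq_2)

lemma ranks_by_three_positions:
  assumes "ranks_by 3 3 score a"
    and "\<And>j. j < 3 \<Longrightarrow> j \<noteq> x \<Longrightarrow> score j 1 < score x 1"
    and "\<And>j. j < 3 \<Longrightarrow> j \<noteq> y \<Longrightarrow> j \<noteq> x \<Longrightarrow> score j 2 < score y 2"
    and "x < 3" "y < 3" "z < 3" "x \<noteq> y" "y \<noteq> z" "x \<noteq> z"
  shows "a 1 = x \<and> a 2 = y \<and> a 3 = z"
proof -
  have first: "a 1 = x"
  proof (rule ranks_by_unique_max[OF assms(1)])
    show "score j 1 < score x 1" if "j < 3" "j \<noteq> x" for j
      using that assms(2) by blast
  qed (simp_all add: assms(4))
  have second: "a 2 = y"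
  proof (rule ranks_by_unique_max[OF assms(1)])
    show "y \<notin> a ` {1..<2}"
      unfolding earlier_positions using first assms(7) by simp
    show "score j 2 < score y 2" if "j < 3" "j \<noteq> y" "j \<notin> a ` {1..<2}" for j
      using that assms(3) first unfolding earlier_positions by blast
  qed (simp_all add: assms(5))
  have "a 3 = z"
  proof (rule ranks_by_unique_max[OF assms(1)])
    show "z \<notin> a ` {1..<3}"
      unfolding earlier_positions using first second assms(8,9) by simp
    fix j
    assume "j < 3" "j \<noteq> z" "j \<notin> a ` {1..<3}"
    then have "j \<noteq> x" "j \<noteq> y"
      unfolding earlier_positions using first second by auto
    moreover have "j = x \<or> j = y \<or> j = z"
      using \<open>j < 3\<close> assms(4-9) by arith
    ultimately show "score j 3 < score z 3"
      using \<open>j \<noteq> z\<close> by blast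
  qed (simp_all add: assms(6))
  with first second show ?thesis by simp
qed

definition example_brand :: "nat \<Rightarrow> bool" where
  "example_brand i \<longleftrightarrow> i \<le> 1"

definition example_bid :: "nat \<Rightarrow> real" where
  "example_bid i = (if i = 0 then 10 else if i = 1 then 9 else 8)"

definition example_beta :: "nat \<Rightarrow> real" where
  "example_beta k = (if k \<le> 1 then 1 else if k = 2 then 4/5 else 0)"

abbreviation example_welfare :: "(nat \<Rightarrow> nat) \<Rightarrow> real" where
  "example_welfare \<equiv> welfare 3 example_brand (\<lambda>_. 1) example_bid example_beta (\<lambda>_. 1)"

lemma example_greedy_order:
  assumes "is_greedy 3 3 example_brand (\<lambda>_. 1) example_bid example_beta (\<lambda>_. 1) g"
  shows "g 1 = 0 \<and> g 2 = 2 \<and> g 3 = 1"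
  using assms unfolding is_greedy_iff_ranks_by
  by (rule ranks_by_three_positions)
     (auto simp: norm_ecpm_def example_brand_def example_bid_def example_beta_def
        less_Suc_eq numeral_3_eq_3)

lemma example_standard_order:
  assumes "is_standard 3 3 (\<lambda>_. 1) example_bid a"
  shows "a 1 = 0 \<and> a 2 = 1 \<and> a 3 = 2"
  using assms unfolding is_standard_iff_ranks_by
  by (rule ranks_by_three_positions)
     (auto simp: example_bid_def less_Suc_eq numeral_3_eq_3)

lemma example_welfare_eq:
  "example_welfare a = example_bid (a 1) * click_prob example_brand (\<lambda>_. 1) example_beta (\<lambda>_. 1) (a 1) 1
     + example_bid (a 2) * click_prob example_brand (\<lambda>_. 1) example_beta (\<lambda>_. 1) (a 2) 2
     + example_bid (a 3) * click_prob example_brand (\<lambda>_. 1) example_beta (\<lambda>_. 1) (a 3) 3"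
  unfolding welfare_def three_positions by simp

theorem theorem7:
  shows "\<exists>s n brand q b beta eta.
           valid_instance s n brand q b beta eta \<and>
           (\<exists>g. is_greedy s n brand q b beta eta g) \<and>
           (\<exists>a. is_standard s n q b a) \<and>
           (\<forall>g a. is_greedy s n brand q b beta eta g \<longrightarrow> is_standard s n q b a \<longrightarrow>
              welfare s brand q b beta eta g < welfare s brand q b beta eta a)"
proof (intro exI conjI allI impI)
  show "valid_instance 3 3 example_brand (\<lambda>_. 1) example_bid example_beta (\<lambda>_. 1)"
    by (auto simp: valid_instance_def example_bid_def example_beta_def)
  show "is_greedy 3 3 example_brand (\<lambda>_. 1) example_bid example_beta (\<lambda>_. 1)
          (\<lambda>k. if k \<le> 1 then 0 else if k = 2 then 2 else 1)"
    unfolding is_greedy_def is_allocation_def three_positions earlier_positions ball_simps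
      all_below_three
    by (simp add: norm_ecpm_def example_brand_def example_bid_def example_beta_def)
  show "is_standard 3 3 (\<lambda>_. 1) example_bid (\<lambda>k. if k \<le> 1 then 0 else if k = 2 then 1 else 2)"
    unfolding is_standard_def is_allocation_def three_positions earlier_positions ball_simps
      all_below_three
    by (simp add: example_bid_def)
  fix g a
  assume "is_greedy 3 3 example_brand (\<lambda>_. 1) example_bid example_beta (\<lambda>_. 1) g"
    and "is_standard 3 3 (\<lambda>_. 1) example_bid a"
  then have "g 1 = 0 \<and> g 2 = 2 \<and> g 3 = 1" and "a 1 = 0 \<and> a 2 = 1 \<and> a 3 = 2"
    using example_greedy_order example_standard_order by blast+
  then show "example_welfare g < example_welfare a"
    by (simp add: example_welfare_eq click_prob_def example_brand_def example_bid_def example_beta_def)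
qed

end
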